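(* Let $n\ge1$ and $k\ge1$ be integers. (i) If $k=1$, then $f_n(\{n-k\})=2^{n-1}$ and $f_n(\{k\})=2^{n-1}$. (ii) If $k>1$ and $n\le k+1$, then $f_n(\{n-k\})=2^{n-1}$ and $f_n(\{k\})=2^{n-1}$. (iii) If $k>1$ and $n>k+1$, then $f_n(\{n-k\})=5\cdot2^{n-3}-2^{n-k-2}$ and $f_n(\{k\})=5\cdot2^{n-3}-2^{k-2}$.
   Context: For $m\ge1$ and a set $B$ of integers, $f_m(B)$ denotes the number of linear orders $q$ on $[m]$ such that for every triple $i<j<k$ in $[m]$: if $j\in B$ then $i$ is not ranked last among $\{i,j,k\}$ in $q$, and if $j\notin B$ then $k$ is not ranked first among $\{i,j,k\}$ in $q$ (only elements of $B\cap\{2,\dots,m-1\}$ matter). *)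

theory Defs
  imports Main
begin

text \<open>A linear order q on [m] = {1..m} is a relation r with linear_order_on;
 (x,y) \<in> r means x is ranked (weakly) before y.\<close>

definition ranked_last :: "nat rel \<Rightarrow> nat \<Rightarrow> nat \<Rightarrow> nat \<Rightarrow> bool" where
  "ranked_last r x y z \<longleftrightarrow> (y, x) \<in> r \<and> (z, x) \<in> r"

definition ranked_first :: "nat rel \<Rightarrow> nat \<Rightarrow> nat \<Rightarrow> nat \<Rightarrow> bool" where
  "ranked_first r x y z \<longleftrightarrow> (x, y) \<in> r \<and> (x, z) \<in> r"

definition f :: "nat \<Rightarrow> int set \<Rightarrow> nat" where
  "f m B = card {r. r \<subseteq> {1..m} \<times> {1..m} \<and> linear_order_on {1..m} r \<and>
     (\<forall>i j k. 1 \<le> i \<and> i < j \<and> j < k \<and> k \<le> m \<longrightarrow>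
        (int j \<in> B \<longrightarrow> \<not> ranked_last r i j k) \<and>
        (int j \<notin> B \<longrightarrow> \<not> ranked_first r k i j))}"

end

theory Submission
  imports Defs
begin

(*
  Insert the element n + 1 into an order on {1..n}: it lands just below an upper set S,
  and the new triples (i, j, n + 1) constrain S only.  If no j in {2..n} lies in B, S is
  empty or the top element, so the count doubles.  If B meets {2..n} exactly in b, S can
  also be the top x with x >= b, or {z, b} where b is on top and the runner-up z is below b.
  Hence f (n + 1) = f n + T n + D n, where T counts orders whose top is at least b and D
  counts orders with b on top over a smaller runner-up.  D stays 2^(b-2) from n = b on, and
  for n > b every admissible order has its top at least b (use the triple (top, b, n)),
  so f (n + 1) = 2 f n + 2^(b-2) starting from f (b + 1) = 2^b.
*)

section \<open>Extending a linear order by one element\<close>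

lemma linear_order_onD:
  assumes "linear_order_on A r"
  shows linear_order_on_subset: "r \<subseteq> A \<times> A"
    and linear_order_on_refl: "x \<in> A \<Longrightarrow> (x, x) \<in> r"
    and linear_order_on_trans: "(x, y) \<in> r \<Longrightarrow> (y, z) \<in> r \<Longrightarrow> (x, z) \<in> r"
    and linear_order_on_antisym: "(x, y) \<in> r \<Longrightarrow> (y, x) \<in> r \<Longrightarrow> x = y"
    and linear_order_on_total: "x \<in> A \<Longrightarrow> y \<in> A \<Longrightarrow> (x, y) \<in> r \<or> (y, x) \<in> r"
  using assms unfolding order_on_defs refl_on_def total_on_def
  by (auto dest: transD antisymD) (metis)

lemma linear_order_onI:
  assumes "r \<subseteq> A \<times> A" and "\<And>x. x \<in> A \<Longrightarrow> (x, x) \<in> r"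
    and "\<And>x y z. (x, y) \<in> r \<Longrightarrow> (y, z) \<in> r \<Longrightarrow> (x, z) \<in> r"
    and "\<And>x y. (x, y) \<in> r \<Longrightarrow> (y, x) \<in> r \<Longrightarrow> x = y"
    and "\<And>x y. x \<in> A \<Longrightarrow> y \<in> A \<Longrightarrow> (x, y) \<in> r \<or> (y, x) \<in> r"
  shows "linear_order_on A r"
  using assms unfolding order_on_defs refl_on_def total_on_def
  by (auto intro: transI antisymI)

lemma linear_order_on_Restr:
  assumes "linear_order_on B r" and "A \<subseteq> B"
  shows "linear_order_on A (Restr r A)"
  using assms linear_order_onD[OF assms(1)]
  by (intro linear_order_onI) (auto, blast+)

definition linorders :: "'a set \<Rightarrow> 'a rel set" where
  "linorders A = {r. linear_order_on A r}"

lemma finite_linorders: "finite A \<Longrightarrow> finite (linorders A)"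
  unfolding linorders_def
  by (rule finite_subset[of _ "Pow (A \<times> A)"]) (auto dest: linear_order_on_subset)

definition upper_set :: "'a rel \<Rightarrow> 'a set \<Rightarrow> 'a set \<Rightarrow> bool" where
  "upper_set r A S \<longleftrightarrow> S \<subseteq> A \<and> r `` S \<subseteq> S"

definition insert_below :: "'a rel \<Rightarrow> 'a set \<Rightarrow> 'a \<Rightarrow> 'a set \<Rightarrow> 'a rel" where
  "insert_below r A a S = r \<union> (A - S) \<times> {a} \<union> {a} \<times> insert a S"

lemma mem_insert_below:
  "(x, y) \<in> insert_below r A a S \<longleftrightarrow>
    (x, y) \<in> r \<or> (x \<in> A - S \<and> y = a) \<or> (x = a \<and> y \<in> insert a S)"
  unfolding insert_below_def by blast

lemma linear_order_on_insert_below: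
  assumes r: "linear_order_on A r" and a: "a \<notin> A" and S: "upper_set r A S"
  shows "linear_order_on (insert a A) (insert_below r A a S)"
proof -
  note rA = linear_order_onD[OF r]
  have SA: "S \<subseteq> A" and closed: "\<And>x y. x \<in> S \<Longrightarrow> (x, y) \<in> r \<Longrightarrow> y \<in> S"
    using S unfolding upper_set_def by auto
  have a_r: "(x, a) \<notin> r" "(a, x) \<notin> r" for x
    using a rA(1) by auto
  show ?thesis
  proof (rule linear_order_onI)
    show "insert_below r A a S \<subseteq> insert a A \<times> insert a A"
      using SA rA(1) unfolding insert_below_def by auto
    show "(x, x) \<in> insert_below r A a S" if "x \<in> insert a A" for x
      using that rA(2) unfolding mem_insert_below by auto
    show "x = y" if "(x, y) \<in> insert_below r A a S" "(y, x) \<in> insert_below r A a S" for x y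
      using that a_r rA(4) unfolding mem_insert_below by blast
    show "(x, y) \<in> insert_below r A a S \<or> (y, x) \<in> insert_below r A a S"
      if "x \<in> insert a A" "y \<in> insert a A" for x y
      using that rA(5)[of x y] unfolding mem_insert_below by auto
    fix x y z
    assume xy: "(x, y) \<in> insert_below r A a S" and yz: "(y, z) \<in> insert_below r A a S"
    show "(x, z) \<in> insert_below r A a S"
    proof (cases "y = a")
      case True
      have "(x, z) \<in> r" if "x \<in> A - S" "z \<in> S"
        using that SA closed rA(5)[of x z] by auto
      then show ?thesis
        using xy yz True a_r unfolding mem_insert_below by auto
    next
      case False
      then show ?thesis
        using xy yz a_r rA(1,3) closed unfolding mem_insert_below by blast
    qed
  qed
qed

lemma Restr_insert_below:
  assumes "linear_order_on A r" and "a \<notin> A"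
  shows "Restr (insert_below r A a S) A = r"
  using assms linear_order_on_subset[OF assms(1)] unfolding insert_below_def by auto

lemma Image_insert_below:
  assumes "linear_order_on A r" and "a \<notin> A" and "S \<subseteq> A"
  shows "insert_below r A a S `` {a} - {a} = S"
  using assms linear_order_on_subset[OF assms(1)] unfolding insert_below_def by auto

lemma upper_set_Image:
  assumes "linear_order_on (insert a A) r"
  shows "upper_set (Restr r A) A (r `` {a} - {a})"
  using linear_order_onD(1,3,4)[OF assms] unfolding upper_set_def by blast

lemma insert_below_Restr_Image:
  assumes r: "linear_order_on (insert a A) r" and a: "a \<notin> A"
  shows "insert_below (Restr r A) A a (r `` {a} - {a}) = r"
proof -
  note rA = linear_order_onD[OF r]
  have "(x, a) \<in> r" if "x \<in> A" "(a, x) \<notin> r" for x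
    using that rA(5)[of x a] by auto
  moreover have "(a, x) \<notin> r" if "(x, a) \<in> r" "x \<noteq> a" for x
    using that rA(4) by blast
  ultimately show ?thesis
    using a rA(1,2) unfolding insert_below_def by auto
qed

lemma card_linorders_insert:
  assumes "finite A" and a: "a \<notin> A"
  shows "card {r \<in> linorders (insert a A). Q r}
    = (\<Sum>r \<in> linorders A. card {S. upper_set r A S \<and> Q (insert_below r A a S)})"
proof -
  let ?L = "{r \<in> linorders (insert a A). Q r}"
  let ?R = "SIGMA r:linorders A. {S. upper_set r A S \<and> Q (insert_below r A a S)}"
  have "bij_betw (\<lambda>r. (Restr r A, r `` {a} - {a})) ?L ?R"
  proof (rule bij_betw_byWitness[where f' = "\<lambda>(r, S). insert_below r A a S"])
    show "\<forall>r \<in> ?L. (\<lambda>(r, S). insert_below r A a S) (Restr r A, r `` {a} - {a}) = r"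
      using a by (simp add: linorders_def insert_below_Restr_Image)
    show "\<forall>p \<in> ?R. (\<lambda>r. (Restr r A, r `` {a} - {a})) ((\<lambda>(r, S). insert_below r A a S) p) = p"
      using a by (clarsimp simp: linorders_def upper_set_def Restr_insert_below Image_insert_below)
    show "(\<lambda>r. (Restr r A, r `` {a} - {a})) ` ?L \<subseteq> ?R"
      using a insert_below_Restr_Image upper_set_Image linear_order_on_Restr
      by (fastforce simp: linorders_def)
    show "(\<lambda>(r, S). insert_below r A a S) ` ?R \<subseteq> ?L"
      using a linear_order_on_insert_below by (auto simp: linorders_def)
  qed
  then have "card ?L = card ?R"
    by (rule bij_betw_same_card)
  also have "\<dots> = (\<Sum>r \<in> linorders A. card {S. upper_set r A S \<and> Q (insert_below r A a S)})"
  proof (rule card_SigmaI)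
    show "\<forall>r \<in> linorders A. finite {S. upper_set r A S \<and> Q (insert_below r A a S)}"
      using \<open>finite A\<close> by (auto simp: upper_set_def intro: finite_subset[of _ "Pow A"])
  qed (rule finite_linorders[OF \<open>finite A\<close>])
  finally show ?thesis .
qed

definition greatest_in :: "'a rel \<Rightarrow> 'a set \<Rightarrow> 'a \<Rightarrow> bool" where
  "greatest_in r A x \<longleftrightarrow> x \<in> A \<and> (\<forall>y \<in> A. (y, x) \<in> r)"

lemma greatest_in_unique:
  assumes "linear_order_on A r" and "greatest_in r B x" and "greatest_in r B y"
  shows "x = y"
  using assms(2,3) linear_order_on_antisym[OF assms(1), of x y] unfolding greatest_in_def by simp

lemma greatest_in_exists:
  assumes r: "linear_order_on A r" and "finite B" "B \<noteq> {}" "B \<subseteq> A"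
  shows "\<exists>x. greatest_in r B x"
  using assms(2-4)
proof (induction B rule: finite_ne_induct)
  case (singleton x)
  then have "greatest_in r {x} x"
    using linear_order_on_refl[OF r, of x] unfolding greatest_in_def by simp
  then show ?case ..
next
  case (insert x B)
  then obtain m where m: "greatest_in r B m"
    by blast
  then have "m \<in> A" "x \<in> A"
    using insert.prems unfolding greatest_in_def by auto
  then consider "(m, x) \<in> r" | "(x, m) \<in> r"
    using linear_order_on_total[OF r] by blast
  then show ?case
  proof cases
    case 1
    have "greatest_in r (insert x B) x"
      using m 1 \<open>x \<in> A\<close> linear_order_on_refl[OF r, of x] linear_order_on_trans[OF r, of _ m x]
      unfolding greatest_in_def by auto
    then show ?thesis ..
  next
    case 2
    then have "greatest_in r (insert x B) m"
      using m unfolding greatest_in_def by simp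
    then show ?thesis ..
  qed
qed

lemma upper_set_singleton_iff:
  assumes r: "linear_order_on A r"
  shows "upper_set r A {x} \<longleftrightarrow> greatest_in r A x"
proof
  assume up: "upper_set r A {x}"
  then have "x \<in> A" and "(x, y) \<in> r \<Longrightarrow> y = x" for y
    unfolding upper_set_def by auto
  then show "greatest_in r A x"
    using linear_order_on_total[OF r, of _ x] linear_order_on_refl[OF r, of x]
    unfolding greatest_in_def by metis
next
  assume top: "greatest_in r A x"
  have "y = x" if "(x, y) \<in> r" for y
    using that top linear_order_on_subset[OF r] linear_order_on_antisym[OF r, of x y]
    unfolding greatest_in_def by blast
  then show "upper_set r A {x}"
    using top unfolding upper_set_def greatest_in_def by auto
qed

lemma upper_set_doubleton_iff:
  assumes r: "linear_order_on A r" and uv: "(u, v) \<in> r" "u \<noteq> v"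
  shows "upper_set r A {u, v} \<longleftrightarrow> greatest_in r A v \<and> greatest_in r (A - {v}) u"
proof
  assume up: "upper_set r A {u, v}"
  then have "u \<in> A" "v \<in> A" and above: "(w, y) \<in> r \<Longrightarrow> w \<in> {u, v} \<Longrightarrow> y \<in> {u, v}" for w y
    unfolding upper_set_def by auto
  have "(v, y) \<in> r \<Longrightarrow> y = v" for y
    using above[of v y] uv linear_order_on_antisym[OF r, of u v] by auto
  moreover have "(u, y) \<in> r \<Longrightarrow> y \<noteq> v \<Longrightarrow> y = u" for y
    using above[of u y] by auto
  ultimately have "(y, v) \<in> r" "y \<noteq> v \<Longrightarrow> (y, u) \<in> r" if "y \<in> A" for y
    using that \<open>u \<in> A\<close> \<open>v \<in> A\<close> linear_order_on_total[OF r] linear_order_on_refl[OF r]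
    by metis+
  then show "greatest_in r A v \<and> greatest_in r (A - {v}) u"
    using \<open>u \<in> A\<close> \<open>v \<in> A\<close> uv(2) unfolding greatest_in_def by auto
next
  assume top: "greatest_in r A v \<and> greatest_in r (A - {v}) u"
  have "y \<in> {u, v}" if "w \<in> {u, v}" "(w, y) \<in> r" for w y
  proof -
    have "y \<in> A"
      using that(2) linear_order_on_subset[OF r] by auto
    then have "(y, v) \<in> r" "y \<noteq> v \<Longrightarrow> (y, u) \<in> r"
      using top unfolding greatest_in_def by auto
    then show ?thesis
      using that uv linear_order_on_antisym[OF r] linear_order_on_trans[OF r] by blast
  qed
  then show "upper_set r A {u, v}"
    using top unfolding upper_set_def greatest_in_def by auto
qed

lemma greatest_in_insert_below:
  assumes r: "linear_order_on A r" and "a \<notin> A" and "S \<subseteq> A"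
  shows "greatest_in (insert_below r A a S) (insert a A) x \<longleftrightarrow>
    (x = a \<and> S = {}) \<or> (x \<in> S \<and> greatest_in r A x)"
proof -
  have "(y, a) \<notin> r" "(a, y) \<notin> r" for y
    using assms(2) linear_order_on_subset[OF r] by auto
  then show ?thesis
    using assms(2,3) unfolding greatest_in_def mem_insert_below by auto
qed

lemma card_image_Collect_unique:
  assumes "\<And>x y. P x \<Longrightarrow> P y \<Longrightarrow> x = y"
  shows "card {g x | x. P x} = of_bool (\<exists>x. P x)"
proof (cases "\<exists>x. P x")
  case True
  then obtain x where "P x"
    by blast
  then have "{g x | x. P x} = {g x}"
    using assms by blast
  then show ?thesis
    using \<open>P x\<close> by auto
qed simp

section \<open>Counting the admissible orders\<close>

definition admissible :: "nat \<Rightarrow> nat set \<Rightarrow> nat rel \<Rightarrow> bool" where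
  "admissible m B r \<longleftrightarrow> (\<forall>i j k. 1 \<le> i \<and> i < j \<and> j < k \<and> k \<le> m \<longrightarrow>
     (j \<in> B \<longrightarrow> \<not> ranked_last r i j k) \<and> (j \<notin> B \<longrightarrow> \<not> ranked_first r k i j))"

definition good_orders :: "nat \<Rightarrow> nat set \<Rightarrow> nat rel set" where
  "good_orders m B = {r \<in> linorders {1..m}. admissible m B r}"

lemma f_eq_card_good_orders: "f m B = card (good_orders m {j. int j \<in> B})"
  unfolding f_def good_orders_def linorders_def admissible_def
  by (rule arg_cong[where f = card]) (auto dest: linear_order_on_subset)

lemma finite_good_orders: "finite (good_orders m B)"
  unfolding good_orders_def using finite_linorders[of "{1..m}"] by auto

lemma admissible_cong:
  assumes "B \<inter> {2..<m} = B' \<inter> {2..<m}"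
  shows "admissible m B r \<longleftrightarrow> admissible m B' r"
proof -
  have "j \<in> B \<longleftrightarrow> j \<in> B'" if "1 \<le> i \<and> i < j \<and> j < k \<and> k \<le> m" for i j k
  proof -
    have "j \<in> {2..<m}"
      using that by auto
    then show ?thesis
      using assms by blast
  qed
  then show ?thesis
    unfolding admissible_def by blast
qed

lemma good_orders_cong:
  "B \<inter> {2..<m} = B' \<inter> {2..<m} \<Longrightarrow> good_orders m B = good_orders m B'"
  unfolding good_orders_def by (simp add: admissible_cong[of B m B'])

lemma admissible_Suc:
  "admissible (Suc n) B r \<longleftrightarrow> admissible n B r \<and>
    (\<forall>i j. 1 \<le> i \<and> i < j \<and> j \<le> n \<longrightarrow>
      (j \<in> B \<longrightarrow> \<not> ranked_last r i j (Suc n)) \<and> (j \<notin> B \<longrightarrow> \<not> ranked_first r (Suc n) i j))"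
  unfolding admissible_def by (auto simp: le_Suc_eq)

lemma admissible_Restr: "admissible m B (Restr r {1..m}) \<longleftrightarrow> admissible m B r"
  unfolding admissible_def ranked_last_def ranked_first_def by auto

text \<open>The constraints on the triples \<open>(i, j, n + 1)\<close> once \<open>n + 1\<close> is inserted just below the
  upper set \<open>S\<close> of an order \<open>r\<close> on \<open>{1..n}\<close>.\<close>

definition compatible :: "nat \<Rightarrow> nat set \<Rightarrow> nat rel \<Rightarrow> nat set \<Rightarrow> bool" where
  "compatible n B r S \<longleftrightarrow> (\<forall>i j. 1 \<le> i \<and> i < j \<and> j \<le> n \<longrightarrow>
     (j \<in> B \<longrightarrow> \<not> (i \<in> S \<and> (j, i) \<in> r)) \<and> (j \<notin> B \<longrightarrow> \<not> (i \<in> S \<and> j \<in> S)))"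

lemma interval_Suc: "{1..Suc n} = insert (Suc n) {1..n}" "Suc n \<notin> {1..n}"
  by auto

lemma admissible_insert_below:
  assumes r: "linear_order_on {1..n} r" and S: "S \<subseteq> {1..n}"
  shows "admissible (Suc n) B (insert_below r {1..n} (Suc n) S) \<longleftrightarrow>
    admissible n B r \<and> compatible n B r S"
proof -
  let ?r' = "insert_below r {1..n} (Suc n) S"
  have "admissible n B ?r' \<longleftrightarrow> admissible n B r"
    using Restr_insert_below[OF r] admissible_Restr[of n B ?r'] by simp
  moreover have "(x, y) \<in> ?r' \<longleftrightarrow> (x, y) \<in> r" if "x \<le> n" "y \<le> n" for x y
    using that unfolding mem_insert_below by auto
  moreover have "(Suc n, i) \<in> ?r' \<longleftrightarrow> i \<in> S" if "1 \<le> i" "i \<le> n" for i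
    using that linear_order_on_subset[OF r] unfolding mem_insert_below by auto
  ultimately show ?thesis
    unfolding admissible_Suc compatible_def ranked_last_def ranked_first_def by auto
qed

lemma card_good_orders_Suc:
  "card {r \<in> good_orders (Suc n) B. Q r} =
    (\<Sum>r \<in> good_orders n B. card {S. upper_set r {1..n} S \<and> compatible n B r S
                                   \<and> Q (insert_below r {1..n} (Suc n) S)})"
proof -
  let ?ins = "\<lambda>r S. insert_below r {1..n} (Suc n) S"
  let ?C = "\<lambda>r. card {S. upper_set r {1..n} S \<and> compatible n B r S \<and> Q (?ins r S)}"
  have "{r \<in> good_orders (Suc n) B. Q r} =
      {r \<in> linorders (insert (Suc n) {1..n}). admissible (Suc n) B r \<and> Q r}"
    unfolding good_orders_def interval_Suc(1) by auto
  then have "card {r \<in> good_orders (Suc n) B. Q r} = (\<Sum>r \<in> linorders {1..n}.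
      card {S. upper_set r {1..n} S \<and> admissible (Suc n) B (?ins r S) \<and> Q (?ins r S)})"
    by (simp add: card_linorders_insert)
  also have "\<dots> = (\<Sum>r \<in> linorders {1..n}. if admissible n B r then ?C r else 0)"
  proof (rule sum.cong)
    fix r
    assume "r \<in> linorders {1..n}"
    then have "upper_set r {1..n} S \<Longrightarrow>
        admissible (Suc n) B (?ins r S) \<longleftrightarrow> admissible n B r \<and> compatible n B r S" for S
      using admissible_insert_below unfolding linorders_def upper_set_def by blast
    then have "{S. upper_set r {1..n} S \<and> admissible (Suc n) B (?ins r S) \<and> Q (?ins r S)} =
        {S. admissible n B r \<and> upper_set r {1..n} S \<and> compatible n B r S \<and> Q (?ins r S)}"
      by blast
    then show "card {S. upper_set r {1..n} S \<and> admissible (Suc n) B (?ins r S) \<and> Q (?ins r S)}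
        = (if admissible n B r then ?C r else 0)"
      by simp
  qed simp
  also have "\<dots> = (\<Sum>r \<in> good_orders n B. ?C r)"
    unfolding good_orders_def by (rule sum.inter_filter[symmetric]) (simp add: finite_linorders)
  finally show ?thesis .
qed

lemma compatible_inactive:
  assumes r: "linear_order_on {1..n} r" and B: "B \<inter> {2..n} = {}"
  shows "upper_set r {1..n} S \<and> compatible n B r S \<longleftrightarrow>
    S = {} \<or> (\<exists>x. S = {x} \<and> greatest_in r {1..n} x)"
proof
  assume S: "upper_set r {1..n} S \<and> compatible n B r S"
  have "\<not> i < j" if "i \<in> S" "j \<in> S" for i j
  proof
    assume "i < j"
    moreover have "1 \<le> i" "j \<le> n"
      using S that unfolding upper_set_def by auto
    moreover have "j \<notin> B"
      using B \<open>i < j\<close> \<open>1 \<le> i\<close> \<open>j \<le> n\<close> by auto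
    ultimately show False
      using S that unfolding compatible_def by blast
  qed
  then have "S = {} \<or> (\<exists>x. S = {x})"
    by (metis empty_iff insertI1 linorder_neqE_nat subsetI subset_singleton_iff)
  then show "S = {} \<or> (\<exists>x. S = {x} \<and> greatest_in r {1..n} x)"
    using S upper_set_singleton_iff[OF r] by blast
next
  assume "S = {} \<or> (\<exists>x. S = {x} \<and> greatest_in r {1..n} x)"
  then show "upper_set r {1..n} S \<and> compatible n B r S"
  proof
    assume "S = {}"
    then show ?thesis
      unfolding upper_set_def compatible_def by simp
  next
    assume "\<exists>x. S = {x} \<and> greatest_in r {1..n} x"
    then show ?thesis
      using B upper_set_singleton_iff[OF r] unfolding compatible_def by auto
  qed
qed

lemma card_compatible_inactive:
  assumes r: "linear_order_on {1..n} r" and "1 \<le> n" and B: "B \<inter> {2..n} = {}"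
  shows "card {S. upper_set r {1..n} S \<and> compatible n B r S} = 2"
proof -
  obtain x where x: "greatest_in r {1..n} x"
    using greatest_in_exists[OF r, of "{1..n}"] \<open>1 \<le> n\<close> by auto
  then have "{S. upper_set r {1..n} S \<and> compatible n B r S} = {{}, {x}}"
    using compatible_inactive[OF r B] greatest_in_unique[OF r] by auto
  then show ?thesis
    by simp
qed

definition top_descent :: "nat rel \<Rightarrow> nat set \<Rightarrow> nat \<Rightarrow> bool" where
  "top_descent r A b \<longleftrightarrow> greatest_in r A b \<and> (\<exists>z < b. greatest_in r (A - {b}) z)"

lemma card_top_descent_witnesses:
  assumes "linear_order_on A r"
  shows "card {{z, b} | z. z < b \<and> greatest_in r A b \<and> greatest_in r (A - {b}) z}
    = of_bool (top_descent r A b)"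
  unfolding top_descent_def
  by (subst card_image_Collect_unique) (use greatest_in_unique[OF assms] in auto)

lemma top_descent_insert_below:
  assumes r: "linear_order_on A r" and "a \<notin> A" "S \<subseteq> A" "b \<in> A" "b < a"
  shows "top_descent (insert_below r A a S) (insert a A) b \<longleftrightarrow>
    b \<in> S \<and> greatest_in r A b \<and> (\<exists>z < b. z \<in> S \<and> greatest_in r (A - {b}) z)"
proof -
  have "(y, a) \<notin> r" "(a, y) \<notin> r" for y
    using assms(2) linear_order_on_subset[OF r] by auto
  then have "greatest_in (insert_below r A a S) (insert a A - {b}) z \<longleftrightarrow>
      z \<in> S \<and> greatest_in r (A - {b}) z" if "z < b" for z
    using that assms(2-5) unfolding greatest_in_def mem_insert_below by auto
  then show ?thesis
    unfolding top_descent_def greatest_in_insert_below[OF r assms(2,3)]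
    using assms(4,5) by auto
qed

lemma compatible_activeD:
  assumes B: "B \<inter> {2..n} = {b}" and S: "upper_set r {1..n} S" "compatible n B r S"
  shows compatible_active_larger: "i \<in> S \<Longrightarrow> j \<in> S \<Longrightarrow> i < j \<Longrightarrow> j = b"
    and compatible_active_below: "i \<in> S \<Longrightarrow> i < b \<Longrightarrow> (b, i) \<notin> r"
proof -
  have SA: "S \<subseteq> {1..n}" and b: "b \<in> B" "b \<le> n"
    using S(1) B unfolding upper_set_def by auto
  assume "i \<in> S"
  then have "1 \<le> i"
    using SA by auto
  show "i < b \<Longrightarrow> (b, i) \<notin> r"
    using S(2) \<open>i \<in> S\<close> \<open>1 \<le> i\<close> b unfolding compatible_def by auto
  assume "j \<in> S" "i < j"
  then have "j \<in> {2..n}"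
    using SA \<open>1 \<le> i\<close> by auto
  moreover have "j \<in> B"
    using S(2) \<open>i \<in> S\<close> \<open>j \<in> S\<close> \<open>i < j\<close> \<open>1 \<le> i\<close> \<open>j \<in> {2..n}\<close> unfolding compatible_def by auto
  ultimately show "j = b"
    using B by blast
qed

lemma compatible_active_cases:
  assumes r: "linear_order_on {1..n} r" and B: "B \<inter> {2..n} = {b}"
    and S: "upper_set r {1..n} S" "compatible n B r S"
  shows "S = {} \<or> (\<exists>x. S = {x} \<and> greatest_in r {1..n} x \<and> b \<le> x) \<or>
    (\<exists>z. S = {z, b} \<and> z < b \<and> greatest_in r {1..n} b \<and> greatest_in r ({1..n} - {b}) z)"
proof -
  note larger = compatible_active_larger[OF B S] and below = compatible_active_below[OF B S]
  have "b \<in> {2..n}"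
    using B by blast
  then have "b \<in> {1..n}"
    by simp
  consider "S = {}" | w where "w \<in> S" "b \<notin> S" | "S = {b}" | z where "z \<in> S" "z \<noteq> b" "b \<in> S"
    by blast
  then show ?thesis
  proof cases
    case (2 w)
    then have "S = {w}"
      using larger by (metis linorder_neqE_nat singleton_iff subsetI subset_antisym)
    then have top: "greatest_in r {1..n} w"
      using S(1) upper_set_singleton_iff[OF r] by simp
    then have "\<not> w < b"
      using below[of w] \<open>w \<in> S\<close> \<open>b \<in> {1..n}\<close> unfolding greatest_in_def by auto
    then show ?thesis
      using \<open>S = {w}\<close> top by auto
  next
    case 3
    then show ?thesis
      using S(1) upper_set_singleton_iff[OF r] by auto
  next
    case (4 z)
    then have "z < b"
      using larger[of b z] linorder_neqE_nat by blast
    have "y \<in> {z, b}" if "y \<in> S" for y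
    proof (rule ccontr)
      assume "y \<notin> {z, b}"
      then consider "y < z" | "z < y"
        using linorder_neqE_nat by blast
      then show False
        using larger[OF that \<open>z \<in> S\<close>] larger[OF \<open>z \<in> S\<close> that] \<open>y \<notin> {z, b}\<close> \<open>z \<noteq> b\<close>
        by cases auto
    qed
    then have "S = {z, b}"
      using 4 by blast
    moreover have "(z, b) \<in> r"
      using linear_order_on_total[OF r, of z b] below[OF \<open>z \<in> S\<close> \<open>z < b\<close>] 4 S(1) \<open>b \<in> {1..n}\<close>
      unfolding upper_set_def by auto
    ultimately show ?thesis
      using S(1) upper_set_doubleton_iff[OF r] \<open>z < b\<close> by auto
  qed simp
qed

lemma compatible_active:
  assumes r: "linear_order_on {1..n} r" and B: "B \<inter> {2..n} = {b}"
  shows "upper_set r {1..n} S \<and> compatible n B r S \<longleftrightarrow>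
    S = {} \<or> (\<exists>x. S = {x} \<and> greatest_in r {1..n} x \<and> b \<le> x) \<or>
    (\<exists>z. S = {z, b} \<and> z < b \<and> greatest_in r {1..n} b \<and> greatest_in r ({1..n} - {b}) z)"
    (is "_ \<longleftrightarrow> S = {} \<or> ?single \<or> ?double")
proof (intro iffI)
  have only_b: "j = b" if "j \<in> B" "2 \<le> j" "j \<le> n" for j
  proof -
    have "j \<in> B \<inter> {2..n}"
      using that by simp
    then show ?thesis
      using B by blast
  qed
  assume "S = {} \<or> ?single \<or> ?double"
  then consider "S = {}" | "?single" | "?double"
    by blast
  then show "upper_set r {1..n} S \<and> compatible n B r S"
  proof cases
    case 1
    then show ?thesis
      unfolding upper_set_def compatible_def by simp
  next
    case 2
    then show ?thesis
      using only_b upper_set_singleton_iff[OF r] unfolding compatible_def by fastforce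
  next
    case 3
    then obtain z where z: "S = {z, b}" "z < b" "greatest_in r {1..n} b" "greatest_in r ({1..n} - {b}) z"
      by blast
    then have "(z, b) \<in> r" "(b, z) \<notin> r"
      using linear_order_on_antisym[OF r, of z b] unfolding greatest_in_def by auto
    then show ?thesis
      using z only_b B upper_set_doubleton_iff[OF r] unfolding compatible_def by auto
  qed
qed (use compatible_active_cases[OF r B] in blast)

lemma card_compatible_active:
  assumes r: "linear_order_on {1..n} r" and B: "B \<inter> {2..n} = {b}"
  shows "card {S. upper_set r {1..n} S \<and> compatible n B r S}
    = 1 + of_bool (\<exists>x. greatest_in r {1..n} x \<and> b \<le> x) + of_bool (top_descent r {1..n} b)"
proof -
  let ?single = "{{x} | x. greatest_in r {1..n} x \<and> b \<le> x}"
  let ?double = "{{z, b} | z. z < b \<and> greatest_in r {1..n} b \<and> greatest_in r ({1..n} - {b}) z}"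
  have "{S. upper_set r {1..n} S \<and> compatible n B r S} = insert {} (?single \<union> ?double)"
    using compatible_active[OF r B] by auto
  moreover have "card ?single = of_bool (\<exists>x. greatest_in r {1..n} x \<and> b \<le> x)"
    using greatest_in_unique[OF r] by (subst card_image_Collect_unique) auto
  moreover have "finite ?single" "finite ?double"
    by (rule finite_subset[of _ "Pow {1..n}"], auto simp: greatest_in_def)+
  moreover have "{} \<notin> ?single \<union> ?double" "?single \<inter> ?double = {}"
    by (auto simp: doubleton_eq_iff)
  ultimately show ?thesis
    using card_top_descent_witnesses[OF r] by (simp add: card_Un_disjoint)
qed

lemma compatible_top_descent_iff:
  assumes r: "linear_order_on {1..n} r" and B: "B \<inter> {2..n} = {b}"
  shows "upper_set r {1..n} S \<and> compatible n B r S \<and>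
      top_descent (insert_below r {1..n} (Suc n) S) {1..Suc n} b \<longleftrightarrow>
    (\<exists>z. S = {z, b} \<and> z < b \<and> greatest_in r {1..n} b \<and> greatest_in r ({1..n} - {b}) z)"
proof -
  have "b \<in> {2..n}"
    using B by blast
  then have "b \<in> {1..n}" "b < Suc n"
    by auto
  then have "top_descent (insert_below r {1..n} (Suc n) S) {1..Suc n} b \<longleftrightarrow>
      b \<in> S \<and> greatest_in r {1..n} b \<and> (\<exists>z < b. z \<in> S \<and> greatest_in r ({1..n} - {b}) z)"
    if "S \<subseteq> {1..n}"
    using top_descent_insert_below[OF r interval_Suc(2) that] unfolding interval_Suc(1) by blast
  then show ?thesis
    using compatible_active[OF r B, of S] unfolding upper_set_def by auto
qed

lemma card_good_orders_greatest_Suc: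
  "card {r \<in> good_orders (Suc n) B. greatest_in r {1..Suc n} (Suc n)} = card (good_orders n B)"
proof -
  have "{S. upper_set r {1..n} S \<and> compatible n B r S \<and>
      greatest_in (insert_below r {1..n} (Suc n) S) {1..Suc n} (Suc n)} = {{}}"
    if "r \<in> good_orders n B" for r
  proof -
    have r: "linear_order_on {1..n} r"
      using that unfolding good_orders_def linorders_def by simp
    have "greatest_in (insert_below r {1..n} (Suc n) S) {1..Suc n} (Suc n) \<longleftrightarrow> S = {}"
      if "S \<subseteq> {1..n}" for S
      using greatest_in_insert_below[OF r interval_Suc(2) that] that
      unfolding interval_Suc(1) by auto
    then show ?thesis
      by (auto simp: upper_set_def compatible_def)
  qed
  then show ?thesis
    by (simp add: card_good_orders_Suc)
qed

lemma card_good_orders_inactive_Suc: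
  assumes "1 \<le> n" and "B \<inter> {2..n} = {}"
  shows "card (good_orders (Suc n) B) = 2 * card (good_orders n B)"
  using card_good_orders_Suc[of n B "\<lambda>_. True"] card_compatible_inactive[OF _ assms]
  by (simp add: good_orders_def linorders_def)

lemma card_good_orders_active_Suc:
  assumes B: "B \<inter> {2..n} = {b}"
  shows "card (good_orders (Suc n) B) = card (good_orders n B)
    + card {r \<in> good_orders n B. \<exists>x. greatest_in r {1..n} x \<and> b \<le> x}
    + card {r \<in> good_orders n B. top_descent r {1..n} b}"
proof -
  have "card (good_orders (Suc n) B) = (\<Sum>r \<in> good_orders n B.
      1 + of_bool (\<exists>x. greatest_in r {1..n} x \<and> b \<le> x) + of_bool (top_descent r {1..n} b))"
    using card_good_orders_Suc[of n B "\<lambda>_. True"] card_compatible_active[OF _ B]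
    by (simp add: good_orders_def linorders_def)
  also have "\<dots> = (\<Sum>r \<in> good_orders n B. 1)
      + (\<Sum>r \<in> good_orders n B. of_bool (\<exists>x. greatest_in r {1..n} x \<and> b \<le> x))
      + (\<Sum>r \<in> good_orders n B. of_bool (top_descent r {1..n} b))"
    by (simp only: sum.distrib)
  also have "\<dots> = card (good_orders n B)
      + card {r \<in> good_orders n B. \<exists>x. greatest_in r {1..n} x \<and> b \<le> x}
      + card {r \<in> good_orders n B. top_descent r {1..n} b}"
    by (simp add: finite_good_orders Int_def)
  finally show ?thesis .
qed

lemma card_top_descent_Suc:
  assumes B: "B \<inter> {2..n} = {b}"
  shows "card {r \<in> good_orders (Suc n) B. top_descent r {1..Suc n} b}
    = card {r \<in> good_orders n B. top_descent r {1..n} b}"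
proof -
  have "card {S. upper_set r {1..n} S \<and> compatible n B r S \<and>
        top_descent (insert_below r {1..n} (Suc n) S) {1..Suc n} b}
      = of_bool (top_descent r {1..n} b)"
    if "r \<in> good_orders n B" for r
  proof -
    have r: "linear_order_on {1..n} r"
      using that unfolding good_orders_def linorders_def by simp
    then show ?thesis
      unfolding compatible_top_descent_iff[OF r B] card_top_descent_witnesses[OF r, symmetric]
      by (simp add: setcompr_eq_image)
  qed
  then show ?thesis
    by (simp add: card_good_orders_Suc finite_good_orders Int_def conj_commute)
qed

lemma good_orders_1: "good_orders 1 B = {{(1, 1)}}"
proof -
  have "linear_order_on {1} r \<longleftrightarrow> r = {(1, 1)}" for r :: "nat rel"
    using linear_order_on_subset[of "{1}" r] linear_order_on_refl[of "{1}" r 1]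
    by (auto simp: linear_order_on_singleton)
  moreover have "admissible 1 B r" for r
    unfolding admissible_def by auto
  ultimately show ?thesis
    unfolding good_orders_def linorders_def by auto
qed

lemma card_good_orders_inactive:
  assumes "1 \<le> m" and "B \<inter> {2..<m} = {}"
  shows "card (good_orders m B) = 2 ^ (m - 1)"
  using assms
proof (induction m rule: nat_induct_at_least)
  case base
  then show ?case
    using good_orders_1[of B] by simp
next
  case (Suc m)
  then have "B \<inter> {2..m} = {}" "B \<inter> {2..<m} = {}"
    by auto
  then show ?case
    using Suc card_good_orders_inactive_Suc[of m B] by (simp add: power_eq_if)
qed

lemma top_descent_iff_greatest_in:
  assumes r: "linear_order_on {1..b} r" and "2 \<le> b"
  shows "top_descent r {1..b} b \<longleftrightarrow> greatest_in r {1..b} b"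
proof -
  have "1 \<in> {1..b} - {b}"
    using assms(2) by auto
  then have "{1..b} - {b} \<noteq> {}"
    by blast
  then obtain z where "greatest_in r ({1..b} - {b}) z"
    using greatest_in_exists[OF r, of "{1..b} - {b}"] by auto
  moreover have "z < b" if "greatest_in r ({1..b} - {b}) z" for z
    using that unfolding greatest_in_def by auto
  ultimately show ?thesis
    unfolding top_descent_def by blast
qed

lemma card_top_descent:
  assumes "2 \<le> b" and "b \<le> n"
  shows "card {r \<in> good_orders n {b}. top_descent r {1..n} b} = 2 ^ (b - 2)"
  using assms(2)
proof (induction n rule: nat_induct_at_least)
  case base
  obtain c where b: "b = Suc (Suc c)"
    using assms(1) by (metis add_2_eq_Suc le_Suc_ex)
  have "{r \<in> good_orders b {b}. top_descent r {1..b} b} = {r \<in> good_orders b {b}. greatest_in r {1..b} b}"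
    using top_descent_iff_greatest_in assms(1) unfolding good_orders_def linorders_def by auto
  also have "card \<dots> = card (good_orders (Suc c) {b})"
    using card_good_orders_greatest_Suc[of "Suc c" "{b}"] b by simp
  also have "\<dots> = 2 ^ (b - 2)"
    using card_good_orders_inactive[of "Suc c" "{b}"] b by simp
  finally show ?case .
next
  case (Suc n)
  then have "{b} \<inter> {2..n} = {b}"
    using assms(1) by auto
  then show ?case
    using Suc card_top_descent_Suc by simp
qed

lemma greatest_in_ge_if_admissible:
  assumes "admissible m {b} r" and "b < m" and "greatest_in r {1..m} x"
  shows "b \<le> x"
proof (rule ccontr)
  assume "\<not> b \<le> x"
  moreover have "1 \<le> x" "ranked_last r x b m"
    using assms(2,3) \<open>\<not> b \<le> x\<close> unfolding greatest_in_def ranked_last_def by auto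
  ultimately show False
    using assms(1,2) unfolding admissible_def by auto
qed

lemma card_good_orders_beyond:
  assumes b: "2 \<le> b"
  shows "int (card (good_orders (Suc b + d) {b})) = 5 * 2 ^ (b - 2 + d) - 2 ^ (b - 2)"
proof (induction d)
  case 0
  obtain c where c: "b = Suc (Suc c)"
    using b by (metis add_2_eq_Suc le_Suc_ex)
  have "{b} \<inter> {2..b} = {b}" "{b} \<inter> {2..<b} = {}"
    using b by auto
  moreover have "{r \<in> good_orders b {b}. \<exists>x. greatest_in r {1..b} x \<and> b \<le> x}
      = {r \<in> good_orders b {b}. greatest_in r {1..b} b}"
    unfolding greatest_in_def by (auto intro: le_antisym)
  ultimately have "card (good_orders (Suc b) {b}) = card (good_orders b {b})
      + card {r \<in> good_orders b {b}. greatest_in r {1..b} b} + 2 ^ (b - 2)"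
    using card_good_orders_active_Suc[of "{b}" b b] card_top_descent[OF b order.refl]
    by simp
  also have "\<dots> = 2 ^ (b - 1) + 2 ^ (b - 2) + 2 ^ (b - 2)"
    using card_good_orders_inactive[of b "{b}"] card_good_orders_inactive[of "Suc c" "{b}"]
      card_good_orders_greatest_Suc[of "Suc c" "{b}"] c
    by simp
  finally show ?case
    using c by simp
next
  case (Suc d)
  let ?m = "Suc b + d"
  have top_ge_b: "\<exists>x. greatest_in r {1..?m} x \<and> b \<le> x" if "r \<in> good_orders ?m {b}" for r
  proof -
    have r: "linear_order_on {1..?m} r" and adm: "admissible ?m {b} r"
      using that unfolding good_orders_def linorders_def by auto
    obtain x where "greatest_in r {1..?m} x"
      using greatest_in_exists[OF r, of "{1..?m}"] by auto
    then show ?thesis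
      using greatest_in_ge_if_admissible[OF adm] by auto
  qed
  have "{b} \<inter> {2..?m} = {b}"
    using b by auto
  moreover from top_ge_b
  have "{r \<in> good_orders ?m {b}. \<exists>x. greatest_in r {1..?m} x \<and> b \<le> x} = good_orders ?m {b}"
    by blast
  ultimately have "card (good_orders (Suc ?m) {b}) = 2 * card (good_orders ?m {b}) + 2 ^ (b - 2)"
    using card_good_orders_active_Suc[of "{b}" ?m b] card_top_descent[OF b, of ?m] by simp
  then show ?case
    using Suc.IH by simp
qed

lemma card_good_orders_singleton:
  assumes "1 \<le> m"
  shows "int (card (good_orders m {b})) =
    (if 2 \<le> b \<and> b + 1 < m then 5 * 2 ^ (m - 3) - 2 ^ (b - 2) else 2 ^ (m - 1))"
proof (cases "2 \<le> b \<and> b < m")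
  case True
  then obtain d where m: "m = Suc b + d"
    by (metis add_Suc less_iff_Suc_add)
  obtain c where c: "b = Suc (Suc c)"
    using True by (metis add_2_eq_Suc le_Suc_ex)
  show ?thesis
    using card_good_orders_beyond[of b d] True unfolding m c by (cases d) auto
next
  case False
  then have "{b} \<inter> {2..<m} = {}"
    by auto
  then show ?thesis
    using False card_good_orders_inactive[OF assms] by auto
qed

theorem proposition6:
  fixes n k :: nat
  assumes "n \<ge> 1" and "k \<ge> 1"
  shows "(k = 1 \<longrightarrow> f n {int n - int k} = 2 ^ (n - 1) \<and> f n {int k} = 2 ^ (n - 1))
     \<and> (k > 1 \<and> n \<le> k + 1 \<longrightarrow> f n {int n - int k} = 2 ^ (n - 1) \<and> f n {int k} = 2 ^ (n - 1))
     \<and> (k > 1 \<and> n > k + 1 \<longrightarrow>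
          int (f n {int n - int k}) = 5 * 2 ^ (n - 3) - 2 ^ (n - k - 2) \<and>
          int (f n {int k}) = 5 * 2 ^ (n - 3) - 2 ^ (k - 2))"
proof -
  have "{j. int j \<in> {int n - int k}} \<inter> {2..<n} = {n - k} \<inter> {2..<n}"
    by auto
  from good_orders_cong[OF this]
  have "f n {int n - int k} = card (good_orders n {n - k})"
    by (simp add: f_eq_card_good_orders)
  moreover have "f n {int k} = card (good_orders n {k})"
    unfolding f_eq_card_good_orders by simp
  moreover have "2 \<le> n - k \<and> n - k + 1 < n \<longleftrightarrow> k > 1 \<and> n > k + 1"
    "2 \<le> k \<and> k + 1 < n \<longleftrightarrow> k > 1 \<and> n > k + 1"
    using assms by auto
  ultimately have
    "int (f n {int n - int k}) = (if k > 1 \<and> n > k + 1 then 5 * 2 ^ (n - 3) - 2 ^ (n - k - 2) else 2 ^ (n - 1))"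
    "int (f n {int k}) = (if k > 1 \<and> n > k + 1 then 5 * 2 ^ (n - 3) - 2 ^ (k - 2) else 2 ^ (n - 1))"
    using card_good_orders_singleton[OF assms(1), of "n - k"] card_good_orders_singleton[OF assms(1), of k]
    by (simp_all add: diff_diff_add)
  then show ?thesis
    by auto
qed

end
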